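(* Let $k\geq 2$ and $n\geq k$ be integers. Then in $\mathcal{H}$, $$ \sum_{\substack{r, s_i\geq 1\\ r+s_1+\cdots +s_{k-1}=n}} z_{r}\,\tilde{\sqcup}\, z_{s_1,\dots, s_{k-1}} = \sum_{\substack{t_i\geq 1\\ t_1+\cdots+t_{k}=n}} C(t_1,\dots, t_{k-1})\, z_{t_1,\dots, t_{k}}. $$
   Context: Let $\mathcal{H}$ be the free $\mathbb{Z}$-module on words in letters $z_s$ ($s\geq1$), with $z_{s_1,\dots,s_k}:=z_{s_1}\cdots z_{s_k}$ and $1$ the empty word. Let $\mathbb{Z}\langle x_0,x_1\rangle$ be the free $\mathbb{Z}$-module on words in two letters $x_0,x_1$, with the shuffle product $\sqcup$ defined bilinearly and recursively by $1\sqcup u=u\sqcup 1=u$ and $(au)\sqcup(bv)=a(u\sqcup (bv))+b((au)\sqcup v)$ for letters $a,b\in\{x_0,x_1\}$ and words $u,v$. Let $\rho$ be the $\mathbb{Z}$-linear bijection from $\mathbb{Z}\oplus \mathbb{Z}\langle x_0,x_1\rangle x_1$ (span of $1$ and words ending in $x_1$) onto $\mathcal{H}$ given by $\rho(1)=1$ and $\rho(x_0^{s_1-1}x_1\cdots x_0^{s_k-1}x_1)=z_{s_1,\dots,s_k}$. Define the product $\tilde{\sqcup}$ on $\mathcal{H}$ by $w_1\,\tilde{\sqcup}\,w_2=\rho\big(\rho^{-1}(w_1)\sqcup\rho^{-1}(w_2)\big)$. For positive integers $t_1,\dots,t_{k-1}$ ($k\geq 2$) with $T_j=t_1+\cdots+t_j$,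 set $C(t_1,\dots,t_{k-1})=\sum_{j=1}^{k-1}2^{T_j-j}+2^{T_{k-1}-(k-1)}$ (so for $k=2$, $C(t_1)=2^{t_1}$). *)

theory Defs
  imports Main
begin

datatype letter = X0 | X1

text \<open>Shuffle of two words, as the list of resulting words counted with multiplicity.\<close>
fun shuffle :: "'a list \<Rightarrow> 'a list \<Rightarrow> 'a list list" where
  "shuffle [] v = [v]"
| "shuffle u [] = [u]"
| "shuffle (a # u) (b # v) =
     map ((#) a) (shuffle u (b # v)) @ map ((#) b) (shuffle (a # u) v)"

text \<open>Elements of a free Z-module on a set of words are represented by their
  coefficient functions. Words of H are lists of positive naturals.\<close>
definition is_hword :: "nat list \<Rightarrow> bool" where
  "is_hword c \<longleftrightarrow> (\<forall>s\<in>set c. 1 \<le> s)"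

definition rho_inv :: "nat list \<Rightarrow> letter list" where
  "rho_inv ss = concat (map (\<lambda>s. replicate (s - 1) X0 @ [X1]) ss)"

definition shuffle_prod :: "'a list \<Rightarrow> 'a list \<Rightarrow> 'a list \<Rightarrow> int" where
  "shuffle_prod u v = (\<lambda>w. int (count_list (shuffle u v) w))"

text \<open>w1 ~sh w2 = rho(rho_inv w1 sh rho_inv w2), as an element of H
  (coefficient function on H-words; rho is a bijection onto the H-words).\<close>
definition hshuffle :: "nat list \<Rightarrow> nat list \<Rightarrow> nat list \<Rightarrow> int" where
  "hshuffle a b = (\<lambda>c. if is_hword c then shuffle_prod (rho_inv a) (rho_inv b) (rho_inv c) else 0)"

definition hbasis :: "nat list \<Rightarrow> nat list \<Rightarrow> int" where
  "hbasis t = (\<lambda>c. if c = t then 1 else 0)"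

definition Ccoef :: "nat list \<Rightarrow> int" where
  "Ccoef ts = (\<Sum>j=1..length ts. 2 ^ (sum_list (take j ts) - j)) + 2 ^ (sum_list ts - length ts)"

definition comps :: "nat \<Rightarrow> nat \<Rightarrow> nat list set" where
  "comps n m = {ts. length ts = m \<and> (\<forall>t\<in>set ts. 1 \<le> t) \<and> sum_list ts = n}"

end

theory Submission
  imports Defs
begin

text \<open>For an H-word c put w = rho_inv c. Counting letters and occurrences of x1 shows that the
  coefficient of z_c on the left is the number F(w) of ways to obtain w as a shuffle of some x0^p x1
  with an arbitrary word v in the domain of \<rho> (empty or ending in x1): the constraints on r and on
  the parts s_i hold automatically. Splitting off the first letter of the shuffle gives
  F(x1 w) = F(w) + [w \<in> dom \<rho>] and F(x0 w) = 2 F(w) - [w = x0^p x1 for some p]. Hence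
  F(x0^(t-1) x1) = 1 and F(x0^(t-1) x1 w') = 2^(t-1) (F(w') + 1) for nonempty w' in dom \<rho>, which is
  the recursion C() = 1, C(t, t_2, ...) = 2^(t-1) (1 + C(t_2, ...)) of the coefficients.\<close>

lemma shuffle_Nil_right [simp]: "shuffle u [] = [u]"
  by (cases u) auto

lemma length_mem_shuffle: "w \<in> set (shuffle u v) \<Longrightarrow> length w = length u + length v"
  by (induction u v arbitrary: w rule: shuffle.induct) auto

lemma count_list_mem_shuffle:
  "w \<in> set (shuffle u v) \<Longrightarrow> count_list w x = count_list u x + count_list v x"
  by (induction u v arbitrary: w rule: shuffle.induct) auto

lemma count_list_shuffle_eq_0:
  "length u + length v \<noteq> length w \<Longrightarrow> count_list (shuffle u v) w = 0"
  by (metis count_list_0_iff length_mem_shuffle)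

lemma count_list_map_Cons:
  "count_list (map ((#) a) xs) (x # w) = (if x = a then count_list xs w else 0)"
  by (induction xs) auto

lemma count_list_shuffle_Cons_Cons:
  "count_list (shuffle (a # u) (b # v)) (x # w) =
     (if x = a then count_list (shuffle u (b # v)) w else 0) +
     (if x = b then count_list (shuffle (a # u) v) w else 0)"
  by (simp add: count_list_map_Cons)

definition rho_words :: "nat \<Rightarrow> letter list set" where
  "rho_words m = {v. length v \<le> m \<and> (v \<noteq> [] \<longrightarrow> last v = X1)}"

lemma Nil_in_rho_words [simp]: "[] \<in> rho_words m"
  by (simp add: rho_words_def)

lemma finite_rho_words [simp]: "finite (rho_words m)"
proof (rule finite_subset)
  show "rho_words m \<subseteq> {v. set v \<subseteq> {X0, X1} \<and> length v \<le> m}"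
    using letter.exhaust by (auto simp: rho_words_def)
  show "finite {v. set v \<subseteq> {X0, X1} \<and> length v \<le> m}"
    by (rule finite_lists_length_le) simp
qed

lemma rho_words_Suc:
  "rho_words (Suc m) = insert [] ((#) X1 ` rho_words m \<union> (#) X0 ` (rho_words m - {[]}))"
  unfolding rho_words_def
  by (rule set_eqI, case_tac x) (auto intro: letter.exhaust simp: image_iff)

lemma sum_rho_words_Suc:
  fixes f :: "letter list \<Rightarrow> int"
  shows "sum f (rho_words (Suc m)) =
    f [] + (\<Sum>v\<in>rho_words m. f (X1 # v)) + (\<Sum>v\<in>rho_words m - {[]}. f (X0 # v))"
proof -
  have disjoint: "(#) X1 ` rho_words m \<inter> (#) X0 ` (rho_words m - {[]}) = {}"
    by auto
  have "sum f (rho_words (Suc m)) =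
      f [] + sum f ((#) X1 ` rho_words m \<union> (#) X0 ` (rho_words m - {[]}))"
    unfolding rho_words_Suc by (subst sum.insert) auto
  also have "\<dots> = f [] + (sum f ((#) X1 ` rho_words m) + sum f ((#) X0 ` (rho_words m - {[]})))"
    using disjoint by (subst sum.union_disjoint) auto
  also have "sum f ((#) X1 ` rho_words m) = (\<Sum>v\<in>rho_words m. f (X1 # v))"
    by (simp add: sum.reindex)
  also have "sum f ((#) X0 ` (rho_words m - {[]})) = (\<Sum>v\<in>rho_words m - {[]}. f (X0 # v))"
    by (simp add: sum.reindex)
  finally show ?thesis by simp
qed

text \<open>The coefficient of w in the shuffle of a with the formal sum of all words in the domain of
  \<rho>; words longer than w cannot contribute.\<close>
definition rho_shuffle_coeff :: "letter list \<Rightarrow> letter list \<Rightarrow> int" where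
  "rho_shuffle_coeff a w = (\<Sum>v\<in>rho_words (length w). int (count_list (shuffle a v) w))"

lemma rho_shuffle_coeff_upto:
  assumes "length w \<le> m"
  shows "rho_shuffle_coeff a w = (\<Sum>v\<in>rho_words m. int (count_list (shuffle a v) w))"
  unfolding rho_shuffle_coeff_def
proof (rule sum.mono_neutral_left)
  show "rho_words (length w) \<subseteq> rho_words m"
    using assms by (auto simp: rho_words_def)
  show "\<forall>v\<in>rho_words m - rho_words (length w). int (count_list (shuffle a v) w) = 0"
    by (auto simp: rho_words_def intro!: count_list_shuffle_eq_0)
qed simp

lemma rho_shuffle_coeff_eq_0: "length w < length a \<Longrightarrow> rho_shuffle_coeff a w = 0"
  unfolding rho_shuffle_coeff_def by (rule sum.neutral) (auto intro!: count_list_shuffle_eq_0)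

lemma rho_shuffle_coeff_Nil: "rho_shuffle_coeff [] w = (if w = [] \<or> last w = X1 then 1 else 0)"
proof -
  have "rho_shuffle_coeff [] w = (\<Sum>v\<in>rho_words (length w). if w = v then 1 else 0)"
    unfolding rho_shuffle_coeff_def by (intro sum.cong) auto
  also have "\<dots> = (if w \<in> rho_words (length w) then 1 else 0)"
    by (simp add: sum.delta)
  finally show ?thesis by (auto simp: rho_words_def)
qed

text \<open>Split by the first letter of the shuffle and by the first letter of v; the correction
  terms account for the empty word, which lies in the domain of \<rho> but has no first letter.\<close>
lemma rho_shuffle_coeff_Cons_Cons:
  "rho_shuffle_coeff (a # u) (x # w) = (if a # u = x # w then 1 else 0)
     + (if x = a then rho_shuffle_coeff u w - (if u = w then 1 else 0) else 0)
     + rho_shuffle_coeff (a # u) w - (if x = X0 \<and> a # u = w then 1 else 0)"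
proof -
  define m where "m = length w"
  define g where "g v = int (count_list (shuffle u v) w)" for v
  define h where "h v = int (count_list (shuffle (a # u) v) w)" for v
  have first_letter: "int (count_list (shuffle (a # u) (b # v)) (x # w)) =
      (if x = a then g (b # v) else 0) + (if x = b then h v else 0)" for b v
    unfolding count_list_shuffle_Cons_Cons g_def h_def by simp
  have "rho_shuffle_coeff (a # u) (x # w) = (if a # u = x # w then 1 else 0)
     + (\<Sum>v\<in>rho_words m. (if x = a then g (X1 # v) else 0) + (if x = X1 then h v else 0))
     + (\<Sum>v\<in>rho_words m - {[]}. (if x = a then g (X0 # v) else 0) + (if x = X0 then h v else 0))"
    unfolding rho_shuffle_coeff_def m_def length_Cons sum_rho_words_Suc first_letter by simp
  also have "\<dots> = (if a # u = x # w then 1 else 0)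
     + (if x = a then (\<Sum>v\<in>rho_words m. g (X1 # v)) + (\<Sum>v\<in>rho_words m - {[]}. g (X0 # v)) else 0)
     + (if x = X1 then (\<Sum>v\<in>rho_words m. h v) else 0)
     + (if x = X0 then (\<Sum>v\<in>rho_words m - {[]}. h v) else 0)"
    by (simp add: sum.distrib if_distrib cong: if_cong)
  also have "(\<Sum>v\<in>rho_words m. g (X1 # v)) + (\<Sum>v\<in>rho_words m - {[]}. g (X0 # v)) =
      rho_shuffle_coeff u w - g []"
    using sum_rho_words_Suc[of g m] rho_shuffle_coeff_upto[of w "Suc m" u]
    by (simp add: g_def m_def)
  also have "(\<Sum>v\<in>rho_words m - {[]}. h v) = rho_shuffle_coeff (a # u) w - h []"
    using sum.remove[OF finite_rho_words Nil_in_rho_words, where g = h]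
    by (simp add: rho_shuffle_coeff_def h_def m_def)
  also have "(\<Sum>v\<in>rho_words m. h v) = rho_shuffle_coeff (a # u) w"
    by (simp add: rho_shuffle_coeff_def h_def m_def)
  finally show ?thesis
    by (cases x) (auto simp: g_def h_def)
qed

definition x0s_x1 :: "nat \<Rightarrow> letter list" where
  "x0s_x1 p = replicate p X0 @ [X1]"

lemma x0s_x1_0: "x0s_x1 0 = [X1]"
  by (simp add: x0s_x1_def)

lemma x0s_x1_Suc: "x0s_x1 (Suc p) = X0 # x0s_x1 p"
  by (simp add: x0s_x1_def)

lemma length_x0s_x1 [simp]: "length (x0s_x1 p) = Suc p"
  by (simp add: x0s_x1_def)

lemma count_list_x0s_x1 [simp]: "count_list (x0s_x1 p) X1 = 1"
  by (simp add: x0s_x1_def)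

lemma x0s_x1_eq_iff: "x0s_x1 p = x0s_x1 q \<longleftrightarrow> p = q"
  by (metis length_x0s_x1 nat.inject)

text \<open>The number F(w) of the proof idea; p \<le> length w suffices for the same reason.\<close>
definition depth_one_coeff :: "letter list \<Rightarrow> int" where
  "depth_one_coeff w = (\<Sum>p\<le>length w. rho_shuffle_coeff (x0s_x1 p) w)"

lemma depth_one_coeff_Nil: "depth_one_coeff [] = 0"
  by (simp add: depth_one_coeff_def rho_shuffle_coeff_eq_0)

lemma depth_one_coeff_upto:
  "length w \<le> m \<Longrightarrow> depth_one_coeff w = (\<Sum>p\<le>m. rho_shuffle_coeff (x0s_x1 p) w)"
  unfolding depth_one_coeff_def
  by (rule sum.mono_neutral_left) (auto simp: rho_shuffle_coeff_eq_0)

lemma depth_one_coeff_X1_Cons: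
  "depth_one_coeff (X1 # w) = depth_one_coeff w + (if w = [] \<or> last w = X1 then 1 else 0)"
proof -
  have "depth_one_coeff (X1 # w) =
      rho_shuffle_coeff (x0s_x1 0) (X1 # w) + (\<Sum>p\<le>length w. rho_shuffle_coeff (x0s_x1 (Suc p)) (X1 # w))"
    unfolding depth_one_coeff_def length_Cons sum.atMost_Suc_shift ..
  also have "rho_shuffle_coeff (x0s_x1 0) (X1 # w) = rho_shuffle_coeff [] w + rho_shuffle_coeff (x0s_x1 0) w"
    by (simp add: x0s_x1_0 rho_shuffle_coeff_Cons_Cons)
  also have "(\<Sum>p\<le>length w. rho_shuffle_coeff (x0s_x1 (Suc p)) (X1 # w)) =
      (\<Sum>p\<le>length w. rho_shuffle_coeff (x0s_x1 (Suc p)) w)"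
    by (rule sum.cong) (auto simp: x0s_x1_Suc rho_shuffle_coeff_Cons_Cons)
  also have "rho_shuffle_coeff [] w + rho_shuffle_coeff (x0s_x1 0) w + \<dots> =
      rho_shuffle_coeff [] w + depth_one_coeff w"
    by (simp add: depth_one_coeff_upto[of w "Suc (length w)"] sum.atMost_Suc_shift del: sum.atMost_Suc)
  finally show ?thesis by (simp add: rho_shuffle_coeff_Nil)
qed

lemma depth_one_coeff_X0_Cons:
  "depth_one_coeff (X0 # w) = 2 * depth_one_coeff w - (if \<exists>p. x0s_x1 p = w then 1 else 0)"
proof -
  define m where "m = length w"
  define I where "I p = (if x0s_x1 p = w then 1 else 0 :: int)" for p
  have "depth_one_coeff (X0 # w) =
      rho_shuffle_coeff (x0s_x1 0) (X0 # w) + (\<Sum>p\<le>m. rho_shuffle_coeff (x0s_x1 (Suc p)) (X0 # w))"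
    unfolding depth_one_coeff_def m_def length_Cons sum.atMost_Suc_shift ..
  also have "rho_shuffle_coeff (x0s_x1 0) (X0 # w) = rho_shuffle_coeff (x0s_x1 0) w - I 0"
    by (simp add: x0s_x1_0 rho_shuffle_coeff_Cons_Cons I_def)
  also have "(\<Sum>p\<le>m. rho_shuffle_coeff (x0s_x1 (Suc p)) (X0 # w)) =
      (\<Sum>p\<le>m. rho_shuffle_coeff (x0s_x1 p) w + (rho_shuffle_coeff (x0s_x1 (Suc p)) w - I (Suc p)))"
    by (rule sum.cong) (auto simp: x0s_x1_Suc rho_shuffle_coeff_Cons_Cons I_def)
  also have "rho_shuffle_coeff (x0s_x1 0) w - I 0 + \<dots> =
      (\<Sum>p\<le>m. rho_shuffle_coeff (x0s_x1 p) w) + (\<Sum>p\<le>Suc m. rho_shuffle_coeff (x0s_x1 p) w - I p)"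
    unfolding sum.atMost_Suc_shift[of _ m] sum.distrib sum_subtractf by linarith
  also have "\<dots> = 2 * depth_one_coeff w - (\<Sum>p\<le>Suc m. I p)"
    using depth_one_coeff_upto[of w m] depth_one_coeff_upto[of w "Suc m"]
    unfolding sum_subtractf m_def by linarith
  also have "(\<Sum>p\<le>Suc m. I p) = (if \<exists>p. x0s_x1 p = w then 1 else 0)"
  proof (cases "\<exists>p. x0s_x1 p = w")
    case True
    then obtain q where q: "x0s_x1 q = w" by blast
    then have "I p = (if p = q then 1 else 0)" for p
      by (simp add: I_def q[symmetric] x0s_x1_eq_iff)
    moreover have "q \<le> Suc m" using q by (auto simp: m_def)
    ultimately show ?thesis using True by simp
  qed (simp add: I_def)
  finally show ?thesis .
qed

lemma depth_one_coeff_x0s_x1: "depth_one_coeff (x0s_x1 q) = 1"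
proof (induction q)
  case 0
  show ?case by (simp add: x0s_x1_0 depth_one_coeff_X1_Cons depth_one_coeff_Nil)
next
  case (Suc q)
  have "\<exists>p. x0s_x1 p = x0s_x1 q" by blast
  with Suc show ?case by (simp add: x0s_x1_Suc depth_one_coeff_X0_Cons)
qed

lemma depth_one_coeff_replicate_X0:
  assumes "count_list w X1 \<noteq> 1"
  shows "depth_one_coeff (replicate q X0 @ w) = 2 ^ q * depth_one_coeff w"
proof (induction q)
  case (Suc q)
  have "count_list (replicate q X0 @ w) X1 \<noteq> 1"
    using assms by simp
  then have "x0s_x1 p \<noteq> replicate q X0 @ w" for p
    by (metis count_list_x0s_x1)
  then show ?case by (simp add: depth_one_coeff_X0_Cons Suc)
qed simp

lemma rho_inv_Nil [simp]: "rho_inv [] = []"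
  by (simp add: rho_inv_def)

lemma rho_inv_Cons [simp]: "rho_inv (s # c) = replicate (s - 1) X0 @ X1 # rho_inv c"
  by (simp add: rho_inv_def)

lemma rho_inv_single: "rho_inv [s] = x0s_x1 (s - 1)"
  by (simp add: x0s_x1_def)

lemma rho_inv_eq_Nil_iff [simp]: "rho_inv c = [] \<longleftrightarrow> c = []"
  by (cases c) auto

lemma is_hword_Nil [simp]: "is_hword []"
  by (simp add: is_hword_def)

lemma is_hword_Cons [simp]: "is_hword (s # c) \<longleftrightarrow> 1 \<le> s \<and> is_hword c"
  by (simp add: is_hword_def)

lemma is_hword_take: "is_hword c \<Longrightarrow> is_hword (take j c)"
  unfolding is_hword_def by (meson in_set_takeD)

lemma is_hword_butlast: "is_hword c \<Longrightarrow> is_hword (butlast c)"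
  unfolding is_hword_def by (meson in_set_butlastD)

lemma length_le_sum_list_hword: "is_hword c \<Longrightarrow> length c \<le> sum_list c"
  by (induction c) auto

lemma length_rho_inv: "is_hword c \<Longrightarrow> length (rho_inv c) = sum_list c"
  by (induction c) auto

lemma count_list_rho_inv: "count_list (rho_inv c) X1 = length c"
  by (induction c) auto

lemma last_rho_inv: "c \<noteq> [] \<Longrightarrow> last (rho_inv c) = X1"
  by (induction c) auto

lemma rho_inv_in_rho_words: "is_hword c \<Longrightarrow> sum_list c \<le> m \<Longrightarrow> rho_inv c \<in> rho_words m"
  by (auto simp: rho_words_def length_rho_inv last_rho_inv)

lemma replicate_X0_Cons_X1_eq_iff:
  "replicate a X0 @ X1 # u = replicate b X0 @ X1 # v \<longleftrightarrow> a = b \<and> u = v"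
proof (induction a arbitrary: b)
  case 0
  then show ?case by (cases b) auto
next
  case (Suc a)
  then show ?case by (cases b) auto
qed

lemma inj_on_rho_inv: "inj_on rho_inv {c. is_hword c}"
proof (rule inj_onI, simp)
  fix c d :: "nat list"
  assume "is_hword c" "is_hword d" "rho_inv c = rho_inv d"
  then show "c = d"
  proof (induction c arbitrary: d)
    case Nil
    then show ?case by (metis rho_inv_eq_Nil_iff)
  next
    case (Cons s c)
    from Cons.prems obtain t d' where d: "d = t # d'"
      by (cases d) auto
    with Cons.prems have "s - 1 = t - 1" and tails: "rho_inv c = rho_inv d'"
      by (simp_all add: replicate_X0_Cons_X1_eq_iff)
    with Cons.prems d have "s = t"
      by auto
    moreover have "c = d'"
      using Cons.IH[of d'] Cons.prems d tails by simp
    ultimately show ?case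
      using d by simp
  qed
qed

lemma rho_inv_surj: "v = [] \<or> last v = X1 \<Longrightarrow> \<exists>c. is_hword c \<and> rho_inv c = v"
proof (induction v)
  case Nil
  show ?case by (intro exI[of _ "[]"]) simp
next
  case (Cons x v)
  show ?case
  proof (cases x)
    case X0
    with Cons.prems have v: "v \<noteq> []" "last v = X1"
      by (cases "v = []", auto)+
    with Cons.IH obtain c where "is_hword c" "rho_inv c = v"
      by blast
    moreover from this v obtain s c' where "c = s # c'"
      by (cases c) auto
    ultimately show ?thesis using X0
      by (intro exI[of _ "Suc s # c'"]) (cases s; auto)
  next
    case X1
    with Cons.prems have "v = [] \<or> last v = X1"
      by (cases "v = []") auto
    with Cons.IH obtain c where "is_hword c" "rho_inv c = v"
      by blast
    with X1 show ?thesis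
      by (intro exI[of _ "1 # c"]) simp
  qed
qed

lemma Ccoef_Nil: "Ccoef [] = 1"
  by (simp add: Ccoef_def)

lemma Ccoef_Cons:
  assumes "is_hword (t # ts)"
  shows "Ccoef (t # ts) = 2 ^ (t - 1) * (1 + Ccoef ts)"
proof -
  define L where "L = length ts"
  have t: "1 \<le> t" and hw: "is_hword ts" using assms by auto
  have exponent: "t + sum_list (take i ts) - Suc i = (t - 1) + (sum_list (take i ts) - i)"
    if "i \<le> L" for i
  proof -
    have "length (take i ts) \<le> sum_list (take i ts)"
      using length_le_sum_list_hword is_hword_take hw by blast
    with that t show ?thesis by (simp add: L_def)
  qed
  have "(\<Sum>j=1..length (t # ts). (2::int) ^ (sum_list (take j (t # ts)) - j))
      = (\<Sum>i=0..L. (2::int) ^ (sum_list (take (Suc i) (t # ts)) - Suc i))"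
    unfolding L_def length_Cons One_nat_def by (rule sum.shift_bounds_cl_Suc_ivl)
  also have "\<dots> = (\<Sum>i=0..L. 2 ^ (t - 1) * (2::int) ^ (sum_list (take i ts) - i))"
    by (rule sum.cong) (auto simp: exponent power_add)
  also have "\<dots> = 2 ^ (t - 1) * (1 + (\<Sum>i=1..L. (2::int) ^ (sum_list (take i ts) - i)))"
    by (simp add: sum_distrib_left[symmetric] sum.atLeast_Suc_atMost)
  finally have first: "(\<Sum>j=1..length (t # ts). (2::int) ^ (sum_list (take j (t # ts)) - j))
      = 2 ^ (t - 1) * (1 + (\<Sum>i=1..L. (2::int) ^ (sum_list (take i ts) - i)))" .
  have "(2::int) ^ (sum_list (t # ts) - length (t # ts)) = 2 ^ (t - 1) * 2 ^ (sum_list ts - L)"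
    using exponent[of L] by (simp add: L_def power_add)
  with first show ?thesis
    unfolding Ccoef_def L_def by (simp add: algebra_simps)
qed

lemma depth_one_coeff_rho_inv:
  "is_hword c \<Longrightarrow> c \<noteq> [] \<Longrightarrow> depth_one_coeff (rho_inv c) = Ccoef (butlast c)"
proof (induction c)
  case (Cons t c)
  show ?case
  proof (cases "c = []")
    case True
    then show ?thesis
      using depth_one_coeff_x0s_x1[of "t - 1"] by (simp add: x0s_x1_def Ccoef_Nil)
  next
    case False
    have "count_list (X1 # rho_inv c) X1 \<noteq> 1"
      using False by (simp add: count_list_rho_inv)
    then have "depth_one_coeff (rho_inv (t # c)) = 2 ^ (t - 1) * depth_one_coeff (X1 # rho_inv c)"
      by (simp add: depth_one_coeff_replicate_X0)
    also have "\<dots> = 2 ^ (t - 1) * (1 + Ccoef (butlast c))"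
      using Cons False by (simp add: depth_one_coeff_X1_Cons last_rho_inv)
    also have "\<dots> = Ccoef (butlast (t # c))"
      using Cons.prems False by (simp add: Ccoef_Cons is_hword_butlast)
    finally show ?thesis .
  qed
qed simp

lemma mem_comps_iff: "c \<in> comps n k \<longleftrightarrow> is_hword c \<and> length c = k \<and> sum_list c = n"
  by (auto simp: comps_def is_hword_def)

lemma finite_comps: "finite (comps n k)"
proof (rule finite_subset)
  show "comps n k \<subseteq> {c. set c \<subseteq> {0..n} \<and> length c = k}"
    unfolding comps_def using member_le_sum_list by fastforce
  show "finite {c. set c \<subseteq> {0..n} \<and> length c = k}"
    by (rule finite_lists_length_eq) simp
qed

lemma sum_mult_hbasis: "finite S \<Longrightarrow> (\<Sum>t\<in>S. f t * hbasis t c) = (if c \<in> S then f c else 0)"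
  by (simp add: hbasis_def if_distrib[where f = "(*) _"] sum.delta' cong: if_cong)

lemma hshuffle_eq_count_list:
  "is_hword c \<Longrightarrow> hshuffle a b c = int (count_list (shuffle (rho_inv a) (rho_inv b)) (rho_inv c))"
  by (simp add: hshuffle_def shuffle_prod_def)

definition splits :: "nat \<Rightarrow> nat \<Rightarrow> (nat \<times> nat list) set" where
  "splits n k = {(r, ss). 1 \<le> r \<and> ss \<in> comps (n - r) (k - 1) \<and> r \<le> n}"

lemma mem_splits_iff:
  "(r, ss) \<in> splits n k \<longleftrightarrow>
     1 \<le> r \<and> r \<le> n \<and> is_hword ss \<and> length ss = k - 1 \<and> sum_list ss = n - r"
  by (auto simp: splits_def mem_comps_iff)

lemma hshuffle_splits_eq_0:
  assumes "(r, ss) \<in> splits n k" and "1 \<le> k" and "c \<notin> comps n k"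
  shows "hshuffle [r] ss c = 0"
proof (cases "is_hword c")
  case True
  have "rho_inv c \<notin> set (shuffle (rho_inv [r]) (rho_inv ss))"
  proof
    assume mem: "rho_inv c \<in> set (shuffle (rho_inv [r]) (rho_inv ss))"
    with assms(1,2) True have "length c = k" "sum_list c = n"
      using length_mem_shuffle[OF mem] count_list_mem_shuffle[OF mem, of X1]
      by (auto simp: mem_splits_iff length_rho_inv count_list_rho_inv)
    with True assms(3) show False
      by (simp add: mem_comps_iff)
  qed
  with True show ?thesis
    by (simp add: hshuffle_eq_count_list count_list_0_iff)
qed (simp add: hshuffle_def)

text \<open>Reindex by (r, ss) \<mapsto> (r - 1, rho_inv ss): every pair (p, v) that contributes to F comes from a
  split, because its length and its number of x1's are forced by those of rho_inv c.\<close>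
lemma sum_hshuffle_splits:
  assumes c: "c \<in> comps n k" and "1 \<le> k"
  shows "(\<Sum>(r, ss)\<in>splits n k. hshuffle [r] ss c) = depth_one_coeff (rho_inv c)"
proof -
  define w where "w = rho_inv c"
  define h where "h = (\<lambda>(r :: nat, ss). (r - 1, rho_inv ss))"
  define f where "f = (\<lambda>(p, v). int (count_list (shuffle (x0s_x1 p) v) w))"
  have hw: "is_hword c" and len_w: "length w = n" and count_w: "count_list w X1 = k"
    using c by (auto simp: mem_comps_iff w_def length_rho_inv count_list_rho_inv)
  have "(\<Sum>(r, ss)\<in>splits n k. hshuffle [r] ss c) = sum (f \<circ> h) (splits n k)"
    by (rule sum.cong) (auto simp: hshuffle_eq_count_list[OF hw] rho_inv_single f_def h_def w_def
        simp del: rho_inv_Cons)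
  also have "\<dots> = sum f (h ` splits n k)"
  proof -
    have "inj_on h (splits n k)"
      using inj_onD[OF inj_on_rho_inv] by (fastforce simp: inj_on_def h_def mem_splits_iff)
    then show ?thesis by (simp add: sum.reindex)
  qed
  also have "\<dots> = sum f ({..n} \<times> rho_words n)"
  proof (rule sum.mono_neutral_left)
    show "h ` splits n k \<subseteq> {..n} \<times> rho_words n"
      by (auto simp: h_def mem_splits_iff intro!: rho_inv_in_rho_words)
    show "\<forall>x\<in>{..n} \<times> rho_words n - h ` splits n k. f x = 0"
    proof (clarsimp)
      fix p v
      assume v: "v \<in> rho_words n" and not_split: "(p, v) \<notin> h ` splits n k"
      show "f (p, v) = 0"
      proof (rule ccontr)
        assume "f (p, v) \<noteq> 0"
        then have mem: "w \<in> set (shuffle (x0s_x1 p) v)"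
          by (simp add: f_def count_list_0_iff)
        from v obtain ss where ss: "is_hword ss" "rho_inv ss = v"
          using rho_inv_surj by (auto simp: rho_words_def)
        have "(Suc p, ss) \<in> splits n k"
          using length_mem_shuffle[OF mem] count_list_mem_shuffle[OF mem, of X1] ss len_w count_w
          by (auto simp: mem_splits_iff length_rho_inv count_list_rho_inv)
        moreover have "h (Suc p, ss) = (p, v)"
          using ss by (simp add: h_def)
        ultimately show False
          using not_split by (metis image_eqI)
      qed
    qed
  qed simp
  also have "\<dots> = depth_one_coeff w"
    by (simp add: depth_one_coeff_def rho_shuffle_coeff_def f_def len_w sum.cartesian_product)
  finally show ?thesis
    by (simp add: w_def)
qed

theorem theorem2p5:
  fixes k n :: nat
  assumes "2 \<le> k" and "k \<le> n"
  shows "(\<lambda>c. \<Sum>(r, ss)\<in>{(r, ss). 1 \<le> r \<and> ss \<in> comps (n - r) (k - 1) \<and> r \<le> n}.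
              hshuffle [r] ss c)
       = (\<lambda>c. \<Sum>ts\<in>comps n k. Ccoef (take (k - 1) ts) * hbasis ts c)"
proof
  fix c
  have "1 \<le> k"
    using assms(1) by simp
  have "(\<Sum>(r, ss)\<in>splits n k. hshuffle [r] ss c) =
      (if c \<in> comps n k then Ccoef (take (k - 1) c) else 0)"
  proof (cases "c \<in> comps n k")
    case True
    then have "is_hword c" "c \<noteq> []" "butlast c = take (k - 1) c"
      using \<open>1 \<le> k\<close> by (auto simp: mem_comps_iff butlast_conv_take)
    with True \<open>1 \<le> k\<close> show ?thesis
      by (simp add: sum_hshuffle_splits depth_one_coeff_rho_inv)
  next
    case False
    with \<open>1 \<le> k\<close> show ?thesis
      by (auto intro!: sum.neutral hshuffle_splits_eq_0)
  qed
  then show "(\<Sum>(r, ss)\<in>{(r, ss). 1 \<le> r \<and> ss \<in> comps (n - r) (k - 1) \<and> r \<le> n}.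
              hshuffle [r] ss c) = (\<Sum>ts\<in>comps n k. Ccoef (take (k - 1) ts) * hbasis ts c)"
    by (simp add: splits_def sum_mult_hbasis finite_comps)
qed

end
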